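(* A real sequence (finite or infinite) is relative convex if and only if it is strictly V-shaped.
   Context: For a real sequence $(x_i)$, $\Delta x_i=x_{i+1}-x_i$. "Increasing" means strictly increasing. A real sequence $a=(a_i)$ is relative convex if there exists an increasing real sequence $t=(t_i)$ with the same index set such that $(\Delta a_i/\Delta t_i)$ is non-decreasing. A sequence is strictly V-shaped if it falls into one of the following cases: (1) strictly monotonic; (2) strictly decreasing and then constant; (3) constant and then strictly increasing; (4) strictly decreasing and then strictly increasing; (5) strictly decreasing, then constant, then strictly increasing. Equivalently, there are indices $m\le M$ (allowed to be $+\infty$ for infinite sequences) such that $a_1>a_2>\dots>a_m=a_{m+1}=\dots=a_M<a_{M+1}<\cdots$. *)

theory Defs
  imports Complex_Main "HOL-Library.Extended_Nat"
begin

text \<open>Sequences are modelled as functions a :: nat => real restricted to an index set I,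
  which is either a finite initial segment {..<n} (a finite sequence a_0,...,a_{n-1})
  or all of nat (an infinite sequence). Indices start at 0 instead of 1.\<close>

definition seq_index_set :: "nat set \<Rightarrow> bool" where
  "seq_index_set I \<longleftrightarrow> (\<exists>n. I = {..<n}) \<or> I = UNIV"

definition fdiff :: "(nat \<Rightarrow> real) \<Rightarrow> nat \<Rightarrow> real" where
  "fdiff x i = x (Suc i) - x i"

definition relative_convex :: "nat set \<Rightarrow> (nat \<Rightarrow> real) \<Rightarrow> bool" where
  "relative_convex I a \<longleftrightarrow>
     (\<exists>t :: nat \<Rightarrow> real. strict_mono_on I t \<and>
        (\<forall>i j. i \<le> j \<and> Suc j \<in> I \<longrightarrow>
            fdiff a i / fdiff t i \<le> fdiff a j / fdiff t j))"

definition strictly_V_shaped :: "nat set \<Rightarrow> (nat \<Rightarrow> real) \<Rightarrow> bool" where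
  "strictly_V_shaped I a \<longleftrightarrow>
     (\<exists>m M :: enat. m \<le> M \<and>
        (\<forall>i. Suc i \<in> I \<longrightarrow>
           (enat (Suc i) \<le> m \<longrightarrow> a i > a (Suc i)) \<and>
           (m \<le> enat i \<and> enat (Suc i) \<le> M \<longrightarrow> a i = a (Suc i)) \<and>
           (M \<le> enat i \<longrightarrow> a i < a (Suc i))))"

end

theory Submission
  imports Defs
begin

text \<open>Both properties are equivalent to the sign of \<open>\<Delta>a\<^sub>i\<close> being non-decreasing in \<open>i\<close>.
  If \<open>\<Delta>t > 0\<close>, the quotient \<open>\<Delta>a\<^sub>i / \<Delta>t\<^sub>i\<close> has the sign of \<open>\<Delta>a\<^sub>i\<close>, so a
  non-decreasing quotient forces non-decreasing signs; conversely, choosing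
  \<open>\<Delta>t\<^sub>i = |\<Delta>a\<^sub>i|\<close> (or \<open>1\<close> where \<open>\<Delta>a\<^sub>i = 0\<close>) makes the quotient equal to that sign.
  A sequence of signs in \<open>{-1, 0, 1}\<close> is non-decreasing exactly when it consists of a block
  of \<open>-1\<close>, then a block of \<open>0\<close>, then a block of \<open>1\<close>, which is the V-shape; the two break
  points are the first indices with \<open>\<Delta>a\<^sub>i \<ge> 0\<close> and with \<open>\<Delta>a\<^sub>i > 0\<close>.\<close>

definition fdiff_sgn_mono :: "nat set \<Rightarrow> (nat \<Rightarrow> real) \<Rightarrow> bool" where
  "fdiff_sgn_mono I a \<longleftrightarrow>
     (\<forall>i j. i \<le> j \<and> Suc j \<in> I \<longrightarrow> sgn (fdiff a i) \<le> sgn (fdiff a j))"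

lemma seq_index_set_downward_closed:
  "seq_index_set I \<Longrightarrow> j \<in> I \<Longrightarrow> i \<le> j \<Longrightarrow> i \<in> I"
  unfolding seq_index_set_def by auto

lemma sgn_mono: "(x :: 'a :: linordered_idom) \<le> y \<Longrightarrow> sgn x \<le> sgn y"
  by (auto simp: sgn_if)

lemma relative_convex_imp_fdiff_sgn_mono:
  assumes I: "seq_index_set I" and "relative_convex I a"
  shows "fdiff_sgn_mono I a"
  unfolding fdiff_sgn_mono_def
proof (intro allI impI)
  obtain t where t_mono: "strict_mono_on I t"
    and ratio_mono: "\<And>i j. i \<le> j \<and> Suc j \<in> I \<Longrightarrow> fdiff a i / fdiff t i \<le> fdiff a j / fdiff t j"
    using \<open>relative_convex I a\<close> unfolding relative_convex_def by blast
  have sgn_ratio: "sgn (fdiff a i / fdiff t i) = sgn (fdiff a i)" if "Suc i \<in> I" for i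
  proof -
    have "i \<in> I"
      using seq_index_set_downward_closed[OF I that] by simp
    then have "fdiff t i > 0"
      using strict_mono_onD[OF t_mono _ that] by (simp add: fdiff_def)
    then show ?thesis by simp
  qed
  fix i j assume ij: "i \<le> j \<and> Suc j \<in> I"
  then have "Suc i \<in> I"
    using seq_index_set_downward_closed[OF I, of "Suc j" "Suc i"] by simp
  then show "sgn (fdiff a i) \<le> sgn (fdiff a j)"
    using sgn_mono[OF ratio_mono[OF ij]] sgn_ratio[of i] sgn_ratio[of j] ij by argo
qed

lemma exists_strict_mono_fdiff_ratio_sgn:
  fixes a :: "nat \<Rightarrow> real"
  obtains t where "strict_mono t" "\<And>i. fdiff a i / fdiff t i = sgn (fdiff a i)"
proof
  define d where "d i = (if fdiff a i = 0 then 1 else \<bar>fdiff a i\<bar>)" for i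
  define t where "t i = (\<Sum>k<i. d k)" for i
  have fdiff_t: "fdiff t i = d i" for i
    unfolding fdiff_def t_def by simp
  have "d i > 0" for i
    unfolding d_def by simp
  then show "strict_mono t"
    unfolding strict_mono_Suc_iff using fdiff_t unfolding fdiff_def by (metis diff_gt_0_iff_gt)
  show "fdiff a i / fdiff t i = sgn (fdiff a i)" for i
    unfolding fdiff_t d_def by (simp add: sgn_if abs_if)
qed

lemma fdiff_sgn_mono_imp_relative_convex:
  "fdiff_sgn_mono I a \<Longrightarrow> relative_convex I a"
  using exists_strict_mono_fdiff_ratio_sgn[of a]
  unfolding relative_convex_def fdiff_sgn_mono_def
  by (metis strict_monoD strict_mono_onI)

lemma enat_Suc_le_iff: "enat (Suc i) \<le> n \<longleftrightarrow> \<not> n \<le> enat i"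
  by (simp add: Suc_ile_eq not_le)

definition first_enat :: "(nat \<Rightarrow> bool) \<Rightarrow> enat" where
  "first_enat P = (if \<exists>i. P i then enat (LEAST i. P i) else \<infinity>)"

lemma first_enat_le_iff: "first_enat P \<le> enat i \<longleftrightarrow> (\<exists>k\<le>i. P k)"
  unfolding first_enat_def by (auto intro: LeastI Least_le order_trans)

lemma first_enat_antimono: "(\<And>i. Q i \<Longrightarrow> P i) \<Longrightarrow> first_enat P \<le> first_enat Q"
  unfolding first_enat_def by (auto intro: Least_le LeastI2)

definition V_sign :: "enat \<Rightarrow> enat \<Rightarrow> enat \<Rightarrow> real" where
  "V_sign m M n = (if n \<le> m then -1 else if n \<le> M then 0 else 1)"

lemma V_sign_mono: "m \<le> M \<Longrightarrow> n \<le> n' \<Longrightarrow> V_sign m M n \<le> V_sign m M n'"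
  unfolding V_sign_def using order_trans[of n n'] by auto

lemma strictly_V_shaped_sgn_fdiff:
  assumes "m \<le> M"
    and V: "(enat (Suc i) \<le> m \<longrightarrow> a i > a (Suc i)) \<and>
            (m \<le> enat i \<and> enat (Suc i) \<le> M \<longrightarrow> a i = a (Suc i)) \<and>
            (M \<le> enat i \<longrightarrow> a i < a (Suc i))"
  shows "sgn (fdiff a i) = V_sign m M (enat (Suc i))"
  using V \<open>m \<le> M\<close> order_trans[of m M "enat i"]
  by (auto simp: V_sign_def enat_Suc_le_iff fdiff_def)

lemma strictly_V_shaped_imp_fdiff_sgn_mono:
  assumes I: "seq_index_set I" and "strictly_V_shaped I a"
  shows "fdiff_sgn_mono I a"
  unfolding fdiff_sgn_mono_def
proof (intro allI impI)
  obtain m M where "m \<le> M" and V: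
    "\<And>i. Suc i \<in> I \<Longrightarrow>
       (enat (Suc i) \<le> m \<longrightarrow> a i > a (Suc i)) \<and>
       (m \<le> enat i \<and> enat (Suc i) \<le> M \<longrightarrow> a i = a (Suc i)) \<and>
       (M \<le> enat i \<longrightarrow> a i < a (Suc i))"
    using \<open>strictly_V_shaped I a\<close> unfolding strictly_V_shaped_def by blast
  fix i j assume ij: "i \<le> j \<and> Suc j \<in> I"
  then have "Suc i \<in> I"
    using seq_index_set_downward_closed[OF I, of "Suc j" "Suc i"] by simp
  then show "sgn (fdiff a i) \<le> sgn (fdiff a j)"
    using strictly_V_shaped_sgn_fdiff[OF \<open>m \<le> M\<close> V] ij
      V_sign_mono[OF \<open>m \<le> M\<close>, of "enat (Suc i)" "enat (Suc j)"]
    by simp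
qed

lemma fdiff_sgn_mono_imp_strictly_V_shaped:
  assumes mono: "fdiff_sgn_mono I a"
  shows "strictly_V_shaped I a"
proof -
  define m where "m = first_enat (\<lambda>i. Suc i \<in> I \<and> fdiff a i \<ge> 0)"
  define M where "M = first_enat (\<lambda>i. Suc i \<in> I \<and> fdiff a i > 0)"
  have propagate: "sgn (fdiff a k) \<le> sgn (fdiff a i)" if "k \<le> i" "Suc i \<in> I" for k i
    using mono that unfolding fdiff_sgn_mono_def by blast
  have "m \<le> M"
    unfolding m_def M_def by (rule first_enat_antimono) auto
  moreover have
    "(enat (Suc i) \<le> m \<longrightarrow> a i > a (Suc i)) \<and>
     (m \<le> enat i \<and> enat (Suc i) \<le> M \<longrightarrow> a i = a (Suc i)) \<and>
     (M \<le> enat i \<longrightarrow> a i < a (Suc i))" if "Suc i \<in> I" for i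
    using that propagate[of _ i]
    unfolding enat_Suc_le_iff m_def M_def first_enat_le_iff
    by (fastforce simp: fdiff_def sgn_if split: if_splits)
  ultimately show ?thesis
    unfolding strictly_V_shaped_def by blast
qed

theorem theorem2p2:
  fixes I :: "nat set" and a :: "nat \<Rightarrow> real"
  assumes "seq_index_set I"
  shows "relative_convex I a \<longleftrightarrow> strictly_V_shaped I a"
  using assms relative_convex_imp_fdiff_sgn_mono fdiff_sgn_mono_imp_relative_convex
    strictly_V_shaped_imp_fdiff_sgn_mono fdiff_sgn_mono_imp_strictly_V_shaped
  by blast

end
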